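(* Let $p=(p_1,\dots,p_n)$ be a probability distribution, $m\ge 2$, $\delta>0$, $\eta>0$, and $\varphi_j=2^{-j}$ for $j\ge 0$. For $j=1,\dots,m$ let $\beta_j,\beta_j':[0,1]\to\mathbb{R}$ satisfy, for all $x\in[0,1]$: $\beta_j(x)^2+\beta_j'(x)^2=1$; $\beta_j(x)^2\le\delta^2$ whenever $0\le x\le\varphi_j$; and $\beta_j(x)^2\ge 1-\delta^2$ whenever $2\varphi_j\le x\le 1$. Let $B_j'(x)=\prod_{i=1}^j\beta_i'(x)$ ($B_0'\equiv1$) and $B_j(x)=B_{j-1}'(x)\beta_j(x)$. For $k=1,\dots,m$ let $S_k$ be a real even polynomial with $|S_k(x)|\le 1$ for all $x\in[-1,1]$ and $$\left|S_k(x)-\frac{\sqrt{\log(2/x)}}{2\sqrt{\log(1/\varphi_{k+1})}}\right|\le\eta\quad\text{for all }x\in[\varphi_k,1].$$ Define $v_k=\sum_{i=1}^n p_i S_k(\sqrt{p_i})^2B_k(\sqrt{p_i})^2\log\frac{1}{\varphi_{k+1}}$ and $v=-2+\sum_{k=1}^m 8v_k$. Then $$|v-H(p)|=\tilde{\mathcal{O}}\!\left(m\delta^2+\eta+\frac{n}{2^m}\right),$$ where $H(p)=-\sum_i p_i\log p_i$.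
   Context: All logarithms are base 2. $\tilde{\mathcal{O}}$ hides constant and polylogarithmic factors. *)

theory Defs
  imports "HOL-Analysis.Analysis" "HOL-Computational_Algebra.Polynomial"
begin

definition phi :: "nat \<Rightarrow> real" where
  "phi j = (1/2) ^ j"

definition Bprime :: "(nat \<Rightarrow> real \<Rightarrow> real) \<Rightarrow> nat \<Rightarrow> real \<Rightarrow> real" where
  "Bprime beta' j x = (\<Prod>i=1..j. beta' i x)"

definition Bfun :: "(nat \<Rightarrow> real \<Rightarrow> real) \<Rightarrow> (nat \<Rightarrow> real \<Rightarrow> real) \<Rightarrow> nat \<Rightarrow> real \<Rightarrow> real" where
  "Bfun beta beta' j x = Bprime beta' (j - 1) x * beta j x"

definition even_poly :: "real poly \<Rightarrow> bool" where
  "even_poly P \<longleftrightarrow> (\<forall>i. odd i \<longrightarrow> coeff P i = 0)"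

definition entropy :: "nat \<Rightarrow> (nat \<Rightarrow> real) \<Rightarrow> real" where
  "entropy n p = - (\<Sum>i=1..n. p i * log 2 (p i))"

definition vk :: "nat \<Rightarrow> (nat \<Rightarrow> real) \<Rightarrow> (nat \<Rightarrow> real poly) \<Rightarrow> (nat \<Rightarrow> real \<Rightarrow> real)
                   \<Rightarrow> (nat \<Rightarrow> real \<Rightarrow> real) \<Rightarrow> nat \<Rightarrow> real" where
  "vk n p S beta beta' k =
     (\<Sum>i=1..n. p i * (poly (S k) (sqrt (p i)))\<^sup>2 * (Bfun beta beta' k (sqrt (p i)))\<^sup>2
                 * log 2 (1 / phi (k+1)))"

definition vest :: "nat \<Rightarrow> nat \<Rightarrow> (nat \<Rightarrow> real) \<Rightarrow> (nat \<Rightarrow> real poly) \<Rightarrow> (nat \<Rightarrow> real \<Rightarrow> real)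
                   \<Rightarrow> (nat \<Rightarrow> real \<Rightarrow> real) \<Rightarrow> real" where
  "vest n m p S beta beta' = -2 + (\<Sum>k=1..m. 8 * vk n p S beta beta' k)"

end

theory Submission
  imports Defs
begin

text \<open>Fix a point x = \<open>sqrt p\<^sub>i\<close> and read \<open>\<beta>\<^sub>j(x)\<^sup>2\<close> as the probability of stopping at step j
  once steps 1, ..., j - 1 have been passed. Then \<open>B\<^sub>k(x)\<^sup>2\<close> is the probability of stopping exactly
  at step k, and the contribution of x to v is the expectation of \<open>8(k+1) S\<^sub>k(x)\<^sup>2\<close> at the stopping
  step. Steps with \<open>x \<le> \<phi>\<^sub>j\<close> stop with probability at most \<open>\<delta>\<^sup>2\<close> and steps with \<open>2\<phi>\<^sub>j \<le> x\<close> with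
  probability at least \<open>1 - \<delta>\<^sup>2\<close>, so the stopping step concentrates around \<open>k \<approx> log(2/x)\<close>, where
  \<open>\<phi>\<^sub>k \<le> x\<close> and hence \<open>8(k+1) S\<^sub>k(x)\<^sup>2 = 2 log(2/x) \<plusminus> 16(k+1)\<eta> = 2 - log p\<^sub>i \<plusminus> 16(k+1)\<eta>\<close>.
  So the contribution of x is \<open>2 - log p\<^sub>i\<close> up to \<open>O(\<delta>\<^sup>2 log\<^sup>2(2/x) + \<eta> log(2/x))\<close> and the
  probability of never stopping, which is small unless \<open>x < 2\<phi>\<^sub>m\<close>. Weighting by \<open>p\<^sub>i\<close> and using
  \<open>\<Sum> p\<^sub>i log\<^sup>2(2/sqrt p\<^sub>i) = O(log\<^sup>2 n)\<close> gives the bound; for \<open>\<delta>\<^sup>2 > 1/2\<close> the trivial estimate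
  \<open>O(m + log\<^sup>2 n)\<close> suffices.\<close>

text \<open>With a j = \<open>\<beta>\<^sub>j(x)\<^sup>2\<close>, survival and stop_prob are \<open>B'\<^sub>k(x)\<^sup>2\<close> and \<open>B\<^sub>k(x)\<^sup>2\<close>.\<close>
definition survival :: "(nat \<Rightarrow> real) \<Rightarrow> nat \<Rightarrow> real" where
  "survival a k = (\<Prod>j=1..k. 1 - a j)"

definition stop_prob :: "(nat \<Rightarrow> real) \<Rightarrow> nat \<Rightarrow> real" where
  "stop_prob a k = survival a (k - 1) * a k"

lemma survival_0 [simp]: "survival a 0 = 1"
  by (simp add: survival_def)

lemma survival_Suc: "survival a (Suc k) = survival a k * (1 - a (Suc k))"
  by (simp add: survival_def prod.cl_ivl_Suc)

lemma stop_prob_Suc: "stop_prob a (Suc k) = survival a k - survival a (Suc k)"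
  by (simp add: stop_prob_def survival_Suc algebra_simps)

lemma sum_stop_prob: "(\<Sum>k=1..m. stop_prob a k) = 1 - survival a m"
  by (induction m) (simp_all add: sum.cl_ivl_Suc stop_prob_Suc)

lemma sum_weighted_stop_prob:
  "(\<Sum>k=1..m. (real k + 1) * stop_prob a k) + (real m + 1) * survival a m
     = 1 + (\<Sum>k<m. survival a k)"
  by (induction m) (simp_all add: sum.cl_ivl_Suc stop_prob_Suc algebra_simps)

lemma survival_bounds:
  assumes "\<forall>j\<in>{1..m}. 0 \<le> a j \<and> a j \<le> 1" and "k \<le> m"
  shows "0 \<le> survival a k \<and> survival a k \<le> 1"
  unfolding survival_def using assms by (auto intro!: prod_nonneg prod_le_1)

lemma stop_prob_bounds:
  assumes "\<forall>j\<in>{1..m}. 0 \<le> a j \<and> a j \<le> 1" and "k \<in> {1..m}"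
  shows "0 \<le> stop_prob a k \<and> stop_prob a k \<le> a k"
  using survival_bounds[OF assms(1), of "k - 1"] assms
  by (auto simp: stop_prob_def intro: mult_left_le_one_le)

lemma card_less_real_le:
  assumes "0 \<le> t"
  shows "real (card ({1..m} \<inter> {k. real k < t})) \<le> t"
proof -
  have "{1..m} \<inter> {k. real k < t} \<subseteq> {1..nat \<lfloor>t\<rfloor>}"
  proof
    fix k
    assume "k \<in> {1..m} \<inter> {k. real k < t}"
    then have "1 \<le> k" "real k < t"
      by auto
    then have "int k \<le> \<lfloor>t\<rfloor>"
      by linarith
    with \<open>1 \<le> k\<close> show "k \<in> {1..nat \<lfloor>t\<rfloor>}"
      by auto
  qed
  then have "card ({1..m} \<inter> {k. real k < t}) \<le> card {1..nat \<lfloor>t\<rfloor>}"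
    by (rule card_mono[rotated]) simp
  then show ?thesis
    using assms by simp linarith
qed

text \<open>Once the hazards are at least 1/2, stopping is at least as likely as surviving each further
  step, so the expected stopping time exceeds the threshold t by a bounded amount.\<close>
lemma sum_weighted_stop_prob_le:
  assumes t: "0 \<le> t" and a: "\<forall>j\<in>{1..m}. 0 \<le> a j \<and> a j \<le> 1"
    and large: "\<forall>k\<in>{1..m}. t \<le> real k \<longrightarrow> 1/2 \<le> a k"
  shows "(\<Sum>k=1..m. (real k + 1) * stop_prob a k) \<le> t + 3"
proof -
  have surv: "0 \<le> survival a k \<and> survival a k \<le> 1" if "k \<le> m" for k
    using survival_bounds[OF a that] .
  have step: "survival a k \<le> of_bool (real k < t) + stop_prob a k" if k: "k \<in> {1..m}" for k
  proof (cases "real k < t")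
    case True
    then show ?thesis
      using surv[of k] stop_prob_bounds[OF a k] k by auto
  next
    case False
    then have "1/2 \<le> a k"
      using large k by auto
    then have "1 - a k \<le> a k"
      by linarith
    then have "survival a (k - 1) * (1 - a k) \<le> survival a (k - 1) * a k"
      using surv[of "k - 1"] k by (intro mult_left_mono) auto
    then show ?thesis
      using False k survival_Suc[of a "k - 1"] by (simp add: stop_prob_def)
  qed
  have "(\<Sum>k=1..m. survival a k) \<le> (\<Sum>k=1..m. of_bool (real k < t) + stop_prob a k)"
    by (rule sum_mono) (rule step)
  also have "\<dots> = real (card ({1..m} \<inter> {k. real k < t})) + (1 - survival a m)"
    unfolding sum.distrib sum_stop_prob by simp
  also have "\<dots> \<le> t + 1"
    using card_less_real_le[OF t, of m] surv[of m] by linarith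
  finally have "(\<Sum>k=1..m. survival a k) \<le> t + 1" .
  moreover have "(\<Sum>k<m. survival a k) \<le> 1 + (\<Sum>k=1..m. survival a k)"
  proof -
    have "(\<Sum>k<m. survival a k) \<le> (\<Sum>k\<le>m. survival a k)"
      using surv by (intro sum_mono2) auto
    also have "\<dots> = 1 + (\<Sum>k=1..m. survival a k)"
      by (simp add: atMost_atLeast0 sum.atLeast_Suc_atMost)
    finally show ?thesis .
  qed
  moreover have "0 \<le> (real m + 1) * survival a m"
    using surv[of m] by simp
  ultimately show ?thesis
    using sum_weighted_stop_prob[where m = m and a = a] by linarith
qed

lemma phi_powr: "phi k = 2 powr (- real k)"
  by (simp add: phi_def powr_minus powr_realpow power_one_over inverse_eq_divide)

lemma log_two_div: "0 < x \<Longrightarrow> log 2 (2 / x) = 1 - log 2 x"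
  by (simp add: log_divide)

lemma phi_le_iff: "0 < x \<Longrightarrow> phi k \<le> x \<longleftrightarrow> log 2 (2 / x) \<le> real k + 1"
  by (auto simp: phi_powr log_two_div powr_le_iff)

lemma two_phi_le_iff:
  assumes "0 < x"
  shows "2 * phi k \<le> x \<longleftrightarrow> log 2 (2 / x) \<le> real k"
proof -
  have "2 * phi k = 2 powr (1 - real k)"
    by (simp add: phi_powr powr_diff powr_minus divide_inverse)
  then show ?thesis
    using assms by (auto simp: log_two_div powr_le_iff)
qed

lemma log_inverse_phi: "log 2 (1 / phi k) = real k"
  by (simp add: phi_def power_one_over log_nat_power)

lemma mult_log_inverse_le:
  assumes y: "0 < y"
  shows "y * log 2 (1 / y) \<le> 2"
proof -
  have "ln (1/2 :: real) \<le> 1/2 - 1"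
    by (rule ln_le_minus_one) simp
  then have ln2: "1/2 \<le> ln (2 :: real)"
    by (simp add: ln_div)
  have "ln (1 / y) \<le> 1 / y - 1"
    using y by (intro ln_le_minus_one) simp
  then have "y * ln (1 / y) \<le> 1"
    using y by (simp add: field_simps)
  then have "y * log 2 (1 / y) \<le> 1 / ln 2"
    using ln2 by (simp add: log_def divide_right_mono)
  also have "\<dots> \<le> 2"
    using ln2 by (simp add: field_simps)
  finally show ?thesis .
qed

lemma sq_mult_log_sq_le:
  assumes x: "0 < x" "x \<le> 1" and N: "1 \<le> N"
  shows "x\<^sup>2 * (log 2 (2 / x))\<^sup>2 \<le> x\<^sup>2 * (1 + log 2 N)\<^sup>2 + 25 / N"
proof (cases "1 / N \<le> x")
  case True
  then have "log 2 (1 / N) \<le> log 2 x"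
    using x N by simp
  then have "log 2 (2 / x) \<le> 1 + log 2 N"
    using x N by (simp add: log_two_div log_divide)
  moreover have "0 \<le> log 2 (2 / x)"
    using x by simp
  ultimately have "(log 2 (2 / x))\<^sup>2 \<le> (1 + log 2 N)\<^sup>2"
    by (rule power_mono)
  then show ?thesis
    using N by (simp add: mult_left_mono add_increasing2)
next
  case False
  define y where "y = sqrt x"
  have y: "0 < y" "y \<le> 1" "x = y\<^sup>2"
    using x by (auto simp: y_def)
  then have "x \<le> y"
    by (simp add: power2_eq_square mult_left_le_one_le)
  have "log 2 (2 / x) = 1 + 2 * log 2 (1 / y)"
    using y by (simp add: log_two_div log_divide log_mult power2_eq_square)
  then have "x * log 2 (2 / x) = x + 2 * y * (y * log 2 (1 / y))"
    using y by (simp add: power2_eq_square algebra_simps)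
  also have "\<dots> \<le> y + 2 * y * 2"
    using \<open>x \<le> y\<close> y mult_log_inverse_le[OF y(1)] by (intro add_mono mult_left_mono) auto
  finally have "x * log 2 (2 / x) \<le> 5 * y"
    by simp
  moreover have "0 \<le> x * log 2 (2 / x)"
    using x by simp
  ultimately have "(x * log 2 (2 / x))\<^sup>2 \<le> (5 * y)\<^sup>2"
    by (rule power_mono)
  also have "\<dots> = 25 * x"
    using y by (simp add: power_mult_distrib)
  also have "\<dots> \<le> 25 / N"
    using False N by (simp add: field_simps)
  finally show ?thesis
    using N by (simp add: power_mult_distrib add_increasing)
qed

lemma distribution_le_1:
  fixes p :: "nat \<Rightarrow> real"
  assumes "\<forall>i\<in>{1..n}. 0 \<le> p i" and "(\<Sum>i=1..n. p i) = 1" and "i \<in> {1..n}"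
  shows "p i \<le> 1"
proof -
  have "p i \<le> (\<Sum>i=1..n. p i)"
    using assms by (intro member_le_sum) auto
  then show ?thesis
    using assms(2) by simp
qed

lemma sum_sq_log_le:
  assumes p: "\<forall>i\<in>{1..n}. 0 \<le> p i" and sum: "(\<Sum>i=1..n. p i) = 1"
  shows "(\<Sum>i=1..n. p i * (log 2 (2 / sqrt (p i)))\<^sup>2) \<le> 26 * (1 + log 2 (real n))\<^sup>2"
proof -
  have n: "1 \<le> n"
    using sum by (cases n) auto
  have "p i * (log 2 (2 / sqrt (p i)))\<^sup>2 \<le> p i * (1 + log 2 (real n))\<^sup>2 + 25 / real n"
    if i: "i \<in> {1..n}" for i
  proof (cases "p i = 0")
    case False
    moreover have "0 \<le> p i"
      using p i by blast
    ultimately have "0 < sqrt (p i)" "sqrt (p i) \<le> 1"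
      using distribution_le_1[OF p sum i] by auto
    with sq_mult_log_sq_le[of "sqrt (p i)" "real n"] n p i show ?thesis
      by simp
  qed simp
  then have "(\<Sum>i=1..n. p i * (log 2 (2 / sqrt (p i)))\<^sup>2)
      \<le> (\<Sum>i=1..n. p i * (1 + log 2 (real n))\<^sup>2 + 25 / real n)"
    by (rule sum_mono)
  also have "\<dots> = (1 + log 2 (real n))\<^sup>2 + 25"
    using n sum by (simp add: sum.distrib flip: sum_distrib_right)
  also have "\<dots> \<le> 26 * (1 + log 2 (real n))\<^sup>2"
    using n by (simp add: one_le_power)
  finally show ?thesis .
qed

lemma sum_sq_log_le_log_sq:
  assumes p: "\<forall>i\<in>{1..n}. 0 \<le> p i" and sum: "(\<Sum>i=1..n. p i) = 1"
    and N: "real n \<le> N" "2 \<le> N"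
  shows "(\<Sum>i=1..n. p i * (log 2 (2 / sqrt (p i)))\<^sup>2) + 1 \<le> 108 * (log 2 N)\<^sup>2"
proof -
  have n: "1 \<le> n"
    using sum by (cases n) auto
  have "1 \<le> log 2 N" "log 2 (real n) \<le> log 2 N"
    using n N by simp_all
  then have "(1 + log 2 (real n))\<^sup>2 \<le> (2 * log 2 N)\<^sup>2"
    using n by (intro power_mono) auto
  moreover have "1 \<le> (1 + log 2 (real n))\<^sup>2"
    using n by (simp add: one_le_power)
  ultimately show ?thesis
    using sum_sq_log_le[OF p sum] by (simp add: power_mult_distrib)
qed

definition point_estimate :: "nat \<Rightarrow> (nat \<Rightarrow> real) \<Rightarrow> (nat \<Rightarrow> real) \<Rightarrow> real" where
  "point_estimate m a s = (\<Sum>k=1..m. stop_prob a k * (8 * (real k + 1) * (s k)\<^sup>2))"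

lemma point_estimate_bounds:
  assumes a: "\<forall>j\<in>{1..m}. 0 \<le> a j \<and> a j \<le> 1" and s: "\<forall>k\<in>{1..m}. \<bar>s k\<bar> \<le> 1"
  shows "0 \<le> point_estimate m a s \<and> point_estimate m a s \<le> 8 * (real m + 1)"
proof -
  have bounded: "0 \<le> stop_prob a k * (8 * (real k + 1) * (s k)\<^sup>2)
      \<and> stop_prob a k * (8 * (real k + 1) * (s k)\<^sup>2) \<le> stop_prob a k * (8 * (real m + 1))"
    if k: "k \<in> {1..m}" for k
  proof -
    have "(s k)\<^sup>2 \<le> 1"
      using s k by (simp add: abs_square_le_1)
    then have "(real k + 1) * (s k)\<^sup>2 \<le> real k + 1"
      by (intro mult_right_le_one_le) auto
    moreover have "real k \<le> real m"
      using k by simp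
    ultimately have "(real k + 1) * (s k)\<^sup>2 \<le> real m + 1"
      by linarith
    then have "8 * (real k + 1) * (s k)\<^sup>2 \<le> 8 * (real m + 1)"
      unfolding mult.assoc by simp
    then show ?thesis
      using stop_prob_bounds[OF a k] by (simp add: mult_left_mono)
  qed
  have "point_estimate m a s \<le> (\<Sum>k=1..m. stop_prob a k) * (8 * (real m + 1))"
    unfolding point_estimate_def sum_distrib_right using bounded by (intro sum_mono) auto
  also have "\<dots> \<le> 8 * (real m + 1)"
    unfolding sum_stop_prob using survival_bounds[OF a, where k = m] by (intro mult_left_le_one_le) auto
  finally show ?thesis
    unfolding point_estimate_def using bounded by (auto intro: sum_nonneg)
qed

text \<open>The data the estimator sees at a single point x = \<open>sqrt p\<^sub>i\<close>: the hazards
  a j = \<open>\<beta>\<^sub>j(x)\<^sup>2\<close> and the values s k = \<open>S\<^sub>k(x)\<close>.\<close>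
locale estimator_point =
  fixes m :: nat and \<delta> \<eta> x :: real and a s :: "nat \<Rightarrow> real"
  assumes m_pos: "1 \<le> m" and eta_nonneg: "0 \<le> \<eta>" and x_pos: "0 < x" and x_le_1: "x \<le> 1"
    and hazard_range: "\<forall>j\<in>{1..m}. 0 \<le> a j \<and> a j \<le> 1"
    and hazard_small: "\<forall>j\<in>{1..m}. x \<le> phi j \<longrightarrow> a j \<le> \<delta>\<^sup>2"
    and hazard_large: "\<forall>j\<in>{1..m}. 2 * phi j \<le> x \<longrightarrow> 1 - \<delta>\<^sup>2 \<le> a j"
    and value_bound: "\<forall>k\<in>{1..m}. \<bar>s k\<bar> \<le> 1"
    and value_approx: "\<forall>k\<in>{1..m}. phi k \<le> x \<longrightarrow>
      \<bar>s k - sqrt (log 2 (2 / x)) / (2 * sqrt (real k + 1))\<bar> \<le> \<eta>"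
begin

lemma log_ge_1: "1 \<le> log 2 (2 / x)"
  using x_pos x_le_1 by (simp add: log_two_div)

lemma estimate_term_small:
  assumes k: "k \<in> {1..m}" and "x < phi k"
  shows "\<bar>stop_prob a k * (8 * (real k + 1) * (s k)\<^sup>2 - 2 * log 2 (2 / x))\<bar>
    \<le> \<delta>\<^sup>2 * (8 * log 2 (2 / x))"
proof -
  have "real k + 1 < log 2 (2 / x)"
    using phi_le_iff[OF x_pos, of k] assms by simp
  moreover have "(s k)\<^sup>2 \<le> 1"
    using value_bound k by (simp add: abs_square_le_1)
  then have "(real k + 1) * (s k)\<^sup>2 \<le> real k + 1"
    by (intro mult_right_le_one_le) auto
  ultimately have "8 * (real k + 1) * (s k)\<^sup>2 \<le> 8 * log 2 (2 / x)"
    by linarith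
  moreover have "0 \<le> 8 * (real k + 1) * (s k)\<^sup>2"
    by simp
  ultimately have "\<bar>8 * (real k + 1) * (s k)\<^sup>2 - 2 * log 2 (2 / x)\<bar> \<le> 8 * log 2 (2 / x)"
    unfolding abs_le_iff using log_ge_1 by linarith
  moreover have "\<bar>stop_prob a k\<bar> \<le> \<delta>\<^sup>2"
    using stop_prob_bounds[OF hazard_range k] hazard_small[rule_format, OF k] assms(2) by auto
  ultimately show ?thesis
    unfolding abs_mult by (intro mult_mono) auto
qed

lemma estimate_term_large:
  assumes k: "k \<in> {1..m}" and "phi k \<le> x"
  shows "\<bar>stop_prob a k * (8 * (real k + 1) * (s k)\<^sup>2 - 2 * log 2 (2 / x))\<bar>
    \<le> 16 * \<eta> * ((real k + 1) * stop_prob a k)"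
proof -
  define T where "T = sqrt (log 2 (2 / x)) / (2 * sqrt (real k + 1))"
  have L: "log 2 (2 / x) \<le> real k + 1"
    using phi_le_iff[OF x_pos, of k] assms by simp
  have T0: "0 \<le> T"
    using log_ge_1 by (simp add: T_def)
  have "T \<le> 1/2"
    using L by (simp add: T_def field_simps)
  have T_sq: "8 * (real k + 1) * T\<^sup>2 = 2 * log 2 (2 / x)"
    using log_ge_1 by (simp add: T_def power_divide power_mult_distrib field_simps)
  have "\<bar>s k - T\<bar> \<le> \<eta>"
    using value_approx k assms(2) unfolding T_def by blast
  have "\<bar>s k\<bar> \<le> 1"
    using value_bound k by blast
  then have "\<bar>s k + T\<bar> \<le> 2"
    using T0 \<open>T \<le> 1/2\<close> by (auto simp: abs_le_iff)
  have "\<bar>(s k)\<^sup>2 - T\<^sup>2\<bar> = \<bar>s k - T\<bar> * \<bar>s k + T\<bar>"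
    by (simp add: power2_eq_square abs_mult[symmetric] algebra_simps)
  also have "\<dots> \<le> \<eta> * 2"
    using \<open>\<bar>s k - T\<bar> \<le> \<eta>\<close> \<open>\<bar>s k + T\<bar> \<le> 2\<close> eta_nonneg by (intro mult_mono) auto
  finally have "\<bar>(s k)\<^sup>2 - T\<^sup>2\<bar> \<le> \<eta> * 2" .
  have "8 * (real k + 1) * (s k)\<^sup>2 - 2 * log 2 (2 / x) = 8 * (real k + 1) * ((s k)\<^sup>2 - T\<^sup>2)"
    unfolding T_sq[symmetric] by (simp add: algebra_simps)
  then have "\<bar>8 * (real k + 1) * (s k)\<^sup>2 - 2 * log 2 (2 / x)\<bar> = 8 * (real k + 1) * \<bar>(s k)\<^sup>2 - T\<^sup>2\<bar>"
    by (simp add: abs_mult)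
  also have "\<dots> \<le> 8 * (real k + 1) * (\<eta> * 2)"
    using \<open>\<bar>(s k)\<^sup>2 - T\<^sup>2\<bar> \<le> \<eta> * 2\<close> by (intro mult_left_mono) auto
  finally have "\<bar>8 * (real k + 1) * (s k)\<^sup>2 - 2 * log 2 (2 / x)\<bar> \<le> 8 * (real k + 1) * (\<eta> * 2)" .
  moreover have "0 \<le> stop_prob a k"
    using stop_prob_bounds[OF hazard_range k] by simp
  ultimately have "\<bar>stop_prob a k * (8 * (real k + 1) * (s k)\<^sup>2 - 2 * log 2 (2 / x))\<bar>
      \<le> stop_prob a k * (8 * (real k + 1) * (\<eta> * 2))"
    unfolding abs_mult by (simp add: mult_left_mono)
  then show ?thesis
    by (simp add: algebra_simps)
qed

lemma estimate_term_le:
  assumes k: "k \<in> {1..m}"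
  shows "\<bar>stop_prob a k * (8 * (real k + 1) * (s k)\<^sup>2 - 2 * log 2 (2 / x))\<bar>
    \<le> of_bool (real k < log 2 (2 / x)) * (\<delta>\<^sup>2 * (8 * log 2 (2 / x)))
      + 16 * \<eta> * ((real k + 1) * stop_prob a k)"
proof -
  have nonneg: "0 \<le> 16 * \<eta> * ((real k + 1) * stop_prob a k)"
    "0 \<le> of_bool (real k < log 2 (2 / x)) * (\<delta>\<^sup>2 * (8 * log 2 (2 / x)))"
    using stop_prob_bounds[OF hazard_range k] eta_nonneg log_ge_1 by auto
  show ?thesis
  proof (cases "x < phi k")
    case True
    then have "real k < log 2 (2 / x)"
      using phi_le_iff[OF x_pos, of k] by simp
    then have "of_bool (real k < log 2 (2 / x)) * (\<delta>\<^sup>2 * (8 * log 2 (2 / x)))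
        = \<delta>\<^sup>2 * (8 * log 2 (2 / x))"
      by simp
    then show ?thesis
      using estimate_term_small[OF k True] nonneg by linarith
  next
    case False
    then show ?thesis
      using estimate_term_large[OF k] nonneg by linarith
  qed
qed

lemma estimate_error:
  assumes \<delta>: "\<delta>\<^sup>2 \<le> 1/2"
  shows "\<bar>point_estimate m a s - 2 * log 2 (2 / x)\<bar>
    \<le> 8 * \<delta>\<^sup>2 * (log 2 (2 / x))\<^sup>2 + 16 * \<eta> * (log 2 (2 / x) + 3)
      + 2 * log 2 (2 / x) * survival a m"
proof -
  define L where "L = log 2 (2 / x)"
  have L: "1 \<le> L"
    using log_ge_1 by (simp add: L_def)
  define d where "d k = stop_prob a k * (8 * (real k + 1) * (s k)\<^sup>2 - 2 * L)" for k
  have "(\<Sum>k=1..m. d k) = point_estimate m a s - 2 * L * (\<Sum>k=1..m. stop_prob a k)"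
    unfolding d_def point_estimate_def
    by (simp add: right_diff_distrib sum_subtractf sum_distrib_left mult_ac)
  then have split: "point_estimate m a s - 2 * L = (\<Sum>k=1..m. d k) - 2 * L * survival a m"
    unfolding sum_stop_prob by (simp add: algebra_simps)
  have large: "\<forall>k\<in>{1..m}. L \<le> real k \<longrightarrow> 1/2 \<le> a k"
    using hazard_large two_phi_le_iff[OF x_pos] \<delta> by (force simp: L_def)
  have "\<bar>\<Sum>k=1..m. d k\<bar> \<le> (\<Sum>k=1..m. \<bar>d k\<bar>)"
    by (rule sum_abs)
  also have "\<dots> \<le> (\<Sum>k=1..m. of_bool (real k < L) * (\<delta>\<^sup>2 * (8 * L))
                      + 16 * \<eta> * ((real k + 1) * stop_prob a k))"
    unfolding d_def L_def by (rule sum_mono) (rule estimate_term_le)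
  also have "\<dots> = real (card ({1..m} \<inter> {k. real k < L})) * (\<delta>\<^sup>2 * (8 * L))
                  + 16 * \<eta> * (\<Sum>k=1..m. (real k + 1) * stop_prob a k)"
    by (simp add: sum.distrib sum_distrib_left)
  also have "\<dots> \<le> L * (\<delta>\<^sup>2 * (8 * L)) + 16 * \<eta> * (L + 3)"
    using card_less_real_le[of L m] sum_weighted_stop_prob_le[OF _ hazard_range large] L eta_nonneg
    by (intro add_mono mult_right_mono mult_left_mono) auto
  finally have "\<bar>\<Sum>k=1..m. d k\<bar> \<le> 8 * \<delta>\<^sup>2 * L\<^sup>2 + 16 * \<eta> * (L + 3)"
    by (simp add: power2_eq_square mult_ac)
  moreover have "0 \<le> 2 * L * survival a m"
    using survival_bounds[OF hazard_range, of m] L by simp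
  ultimately show ?thesis
    unfolding L_def[symmetric] split by (simp add: abs_le_iff)
qed

lemma sq_mult_survival_le:
  "x\<^sup>2 * (log 2 (2 / x) * survival a m) \<le> \<delta>\<^sup>2 * (x\<^sup>2 * log 2 (2 / x)) + 6 / 2 ^ m"
proof -
  have L: "0 \<le> x\<^sup>2 * log 2 (2 / x)"
    using log_ge_1 by simp
  have surv: "0 \<le> survival a k \<and> survival a k \<le> 1" if "k \<le> m" for k
    using survival_bounds[OF hazard_range that] .
  show ?thesis
  proof (cases "2 * phi m \<le> x")
    case True
    have m: "m \<in> {1..m}"
      using m_pos by simp
    have "survival a m = survival a (m - 1) * (1 - a m)"
      using survival_Suc[of a "m - 1"] m_pos by simp
    also have "\<dots> \<le> 1 - a m"
      using surv[of "m - 1"] hazard_range m by (intro mult_left_le_one_le) auto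
    also have "\<dots> \<le> \<delta>\<^sup>2"
      using hazard_large[rule_format, OF m True] by simp
    finally have "x\<^sup>2 * log 2 (2 / x) * survival a m \<le> x\<^sup>2 * log 2 (2 / x) * \<delta>\<^sup>2"
      using L by (intro mult_left_mono)
    then show ?thesis
      by (simp add: mult_ac add_increasing2)
  next
    case False
    then have x: "x < 2 / 2 ^ m"
      by (simp add: phi_def power_one_over)
    have "x * log 2 (2 / x) = x + x * log 2 (1 / x)"
      using x_pos by (simp add: log_two_div log_divide algebra_simps)
    also have "\<dots> \<le> 3"
      using x_le_1 mult_log_inverse_le[OF x_pos] by linarith
    finally have "x\<^sup>2 * log 2 (2 / x) \<le> 3 * x"
      using x_pos by (simp add: power2_eq_square mult_ac mult_left_mono)
    moreover have "x\<^sup>2 * (log 2 (2 / x) * survival a m) \<le> x\<^sup>2 * log 2 (2 / x)"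
      using L surv[of m] unfolding mult.assoc[symmetric] by (intro mult_right_le_one_le) auto
    moreover have "3 * x \<le> 6 / 2 ^ m"
      using x by simp
    moreover have "0 \<le> \<delta>\<^sup>2 * (x\<^sup>2 * log 2 (2 / x))"
      using L by simp
    ultimately show ?thesis
      by linarith
  qed
qed

lemma pointwise_error_small_delta:
  assumes \<delta>: "\<delta>\<^sup>2 \<le> 1/2"
  shows "x\<^sup>2 * \<bar>point_estimate m a s - 2 * log 2 (2 / x)\<bar>
    \<le> 64 * (x\<^sup>2 * ((log 2 (2 / x))\<^sup>2 + 1)) * (real m * \<delta>\<^sup>2 + \<eta>) + 12 / 2 ^ m"
proof -
  define L where "L = log 2 (2 / x)"
  have L: "1 \<le> L" "L \<le> L\<^sup>2"
    using log_ge_1 by (auto simp: L_def power2_eq_square)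
  have "L\<^sup>2 + 1 \<le> (L\<^sup>2 + 1) * real m"
    using mult_left_mono[of 1 "real m" "L\<^sup>2 + 1"] m_pos by simp
  then have Lm: "8 * L\<^sup>2 + 2 * L \<le> 64 * (L\<^sup>2 + 1) * real m"
    using L by linarith
  have "x\<^sup>2 * \<bar>point_estimate m a s - 2 * L\<bar>
      \<le> x\<^sup>2 * (8 * \<delta>\<^sup>2 * L\<^sup>2 + 16 * \<eta> * (L + 3) + 2 * L * survival a m)"
    using estimate_error[OF \<delta>, folded L_def] by (intro mult_left_mono) auto
  also have "\<dots> = x\<^sup>2 * (8 * \<delta>\<^sup>2 * L\<^sup>2 + 16 * \<eta> * (L + 3)) + 2 * (x\<^sup>2 * (L * survival a m))"
    by (simp add: algebra_simps)
  also have "\<dots> \<le> x\<^sup>2 * (8 * \<delta>\<^sup>2 * L\<^sup>2 + 16 * \<eta> * (L + 3)) + 2 * (\<delta>\<^sup>2 * (x\<^sup>2 * L)) + 12 / 2 ^ m"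
    using sq_mult_survival_le[folded L_def] by simp
  also have "\<dots> = x\<^sup>2 * (\<delta>\<^sup>2 * (8 * L\<^sup>2 + 2 * L) + \<eta> * (16 * L + 48)) + 12 / 2 ^ m"
    by (simp add: algebra_simps)
  also have "\<dots> \<le> x\<^sup>2 * (\<delta>\<^sup>2 * (64 * (L\<^sup>2 + 1) * real m) + \<eta> * (64 * (L\<^sup>2 + 1))) + 12 / 2 ^ m"
    using Lm L eta_nonneg by (intro add_mono mult_left_mono order.refl) auto
  finally show ?thesis
    by (simp add: L_def algebra_simps)
qed

lemma pointwise_error_large_delta:
  assumes \<delta>: "1/2 < \<delta>\<^sup>2"
  shows "x\<^sup>2 * \<bar>point_estimate m a s - 2 * log 2 (2 / x)\<bar>
    \<le> 64 * (x\<^sup>2 * ((log 2 (2 / x))\<^sup>2 + 1)) * (real m * \<delta>\<^sup>2 + \<eta>) + 12 / 2 ^ m"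
proof -
  define L where "L = log 2 (2 / x)"
  have L: "1 \<le> L" "L \<le> L\<^sup>2"
    using log_ge_1 by (auto simp: L_def power2_eq_square)
  have m: "1 \<le> real m"
    using m_pos by simp
  have "0 \<le> point_estimate m a s" "point_estimate m a s \<le> 8 * (real m + 1)"
    using point_estimate_bounds[OF hazard_range value_bound] by auto
  then have "\<bar>point_estimate m a s - 2 * L\<bar> \<le> 8 * (real m + 1) + 2 * L"
    using L by (simp add: abs_le_iff)
  also have "\<dots> \<le> 32 * (L\<^sup>2 * real m) + 32 * real m"
    using L m mult_left_mono[OF m zero_le_power2, of L, unfolded mult_1_right] by argo
  also have "\<dots> = 64 * (L\<^sup>2 + 1) * (real m * (1/2))"
    by (simp add: algebra_simps)
  also have "\<dots> \<le> 64 * (L\<^sup>2 + 1) * (real m * \<delta>\<^sup>2 + \<eta>)"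
    using \<delta> eta_nonneg by (intro mult_left_mono add_increasing2) auto
  finally have "x\<^sup>2 * \<bar>point_estimate m a s - 2 * L\<bar> \<le> x\<^sup>2 * (64 * (L\<^sup>2 + 1) * (real m * \<delta>\<^sup>2 + \<eta>))"
    by (intro mult_left_mono) auto
  also have "\<dots> = 64 * (x\<^sup>2 * (L\<^sup>2 + 1)) * (real m * \<delta>\<^sup>2 + \<eta>)"
    by (simp add: mult_ac)
  finally show ?thesis
    unfolding L_def by (rule add_increasing2[rotated]) simp
qed

lemma pointwise_error:
  "x\<^sup>2 * \<bar>point_estimate m a s - 2 * log 2 (2 / x)\<bar>
    \<le> 64 * (x\<^sup>2 * ((log 2 (2 / x))\<^sup>2 + 1)) * (real m * \<delta>\<^sup>2 + \<eta>) + 12 / 2 ^ m"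
  using pointwise_error_small_delta pointwise_error_large_delta by fastforce

end

lemma Bfun_sq_eq_stop_prob:
  assumes "\<forall>j\<in>{1..k - 1}. (beta j x)\<^sup>2 + (beta' j x)\<^sup>2 = 1"
  shows "(Bfun beta beta' k x)\<^sup>2 = stop_prob (\<lambda>j. (beta j x)\<^sup>2) k"
proof -
  have "(Bprime beta' (k - 1) x)\<^sup>2 = (\<Prod>j=1..k - 1. (beta' j x)\<^sup>2)"
    by (simp add: Bprime_def prod_power_distrib)
  also have "\<dots> = (\<Prod>j=1..k - 1. 1 - (beta j x)\<^sup>2)"
  proof (rule prod.cong)
    fix j
    assume "j \<in> {1..k - 1}"
    then show "(beta' j x)\<^sup>2 = 1 - (beta j x)\<^sup>2"
      using assms by force
  qed simp
  finally show ?thesis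
    by (simp add: Bfun_def stop_prob_def survival_def power_mult_distrib)
qed

lemma vest_eq_sum_point_estimate:
  assumes beta: "\<forall>j\<in>{1..m}. \<forall>x\<in>{0..1}. (beta j x)\<^sup>2 + (beta' j x)\<^sup>2 = 1"
    and p: "\<forall>i\<in>{1..n}. 0 \<le> p i \<and> p i \<le> 1"
  shows "vest n m p S beta beta' = -2 + (\<Sum>i=1..n. p i *
    point_estimate m (\<lambda>j. (beta j (sqrt (p i)))\<^sup>2) (\<lambda>k. poly (S k) (sqrt (p i))))"
proof -
  define a where "a = (\<lambda>i j. (beta j (sqrt (p i)))\<^sup>2)"
  define s where "s = (\<lambda>i k. poly (S k) (sqrt (p i)))"
  have "8 * vk n p S beta beta' k
      = (\<Sum>i=1..n. p i * (stop_prob (a i) k * (8 * (real k + 1) * (s i k)\<^sup>2)))"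
    if k: "k \<in> {1..m}" for k
  proof -
    have "(Bfun beta beta' k (sqrt (p i)))\<^sup>2 = stop_prob (a i) k" if "i \<in> {1..n}" for i
      unfolding a_def using beta k p that by (intro Bfun_sq_eq_stop_prob) auto
    then show ?thesis
      unfolding vk_def sum_distrib_left log_inverse_phi
      by (intro sum.cong) (simp_all add: s_def algebra_simps)
  qed
  then have "(\<Sum>k=1..m. 8 * vk n p S beta beta' k)
      = (\<Sum>k=1..m. \<Sum>i=1..n. p i * (stop_prob (a i) k * (8 * (real k + 1) * (s i k)\<^sup>2)))"
    by (rule sum.cong[OF refl])
  also have "\<dots> = (\<Sum>i=1..n. p i * point_estimate m (a i) (s i))"
    unfolding point_estimate_def sum_distrib_left by (rule sum.swap)
  finally show ?thesis
    by (simp add: vest_def a_def s_def)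
qed

lemma entropy_eq_sum:
  fixes p :: "nat \<Rightarrow> real"
  assumes p: "\<forall>i\<in>{1..n}. 0 \<le> p i" and sum: "(\<Sum>i=1..n. p i) = 1"
  shows "entropy n p = (\<Sum>i=1..n. p i * (2 * log 2 (2 / sqrt (p i)))) - 2"
proof -
  have "p i * (2 * log 2 (2 / sqrt (p i))) = 2 * p i - p i * log 2 (p i)" if i: "i \<in> {1..n}" for i
  proof (cases "p i = 0")
    case False
    moreover have "0 \<le> p i"
      using p i by blast
    ultimately have "0 < p i"
      by simp
    moreover have "log 2 (p i) = 2 * log 2 (sqrt (p i))"
      using log_nat_power[of "sqrt (p i)" 2 2] \<open>0 \<le> p i\<close> by simp
    ultimately show ?thesis
      by (simp add: log_two_div algebra_simps)
  qed simp
  then have "(\<Sum>i=1..n. p i * (2 * log 2 (2 / sqrt (p i))))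
      = 2 * (\<Sum>i=1..n. p i) - (\<Sum>i=1..n. p i * log 2 (p i))"
    by (simp add: sum_subtractf sum_distrib_left)
  then show ?thesis
    using sum by (simp add: entropy_def)
qed

lemma estimator_point_of_beta_S:
  assumes "1 \<le> m" "0 \<le> \<eta>" and x: "0 < x" "x \<le> 1"
    and beta: "\<forall>j\<in>{1..m}. \<forall>x\<in>{0..1}.
        (beta j x)\<^sup>2 + (beta' j x)\<^sup>2 = 1 \<and>
        (x \<le> phi j \<longrightarrow> (beta j x)\<^sup>2 \<le> \<delta>\<^sup>2) \<and>
        (2 * phi j \<le> x \<longrightarrow> (beta j x)\<^sup>2 \<ge> 1 - \<delta>\<^sup>2)"
    and S: "\<forall>k\<in>{1..m}. (\<forall>x\<in>{-1..1}. \<bar>poly (S k) x\<bar> \<le> 1) \<and>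
        (\<forall>x\<in>{phi k..1}. \<bar>poly (S k) x - sqrt (log 2 (2 / x)) / (2 * sqrt (log 2 (1 / phi (k+1))))\<bar> \<le> \<eta>)"
  shows "estimator_point m \<delta> \<eta> x (\<lambda>j. (beta j x)\<^sup>2) (\<lambda>k. poly (S k) x)"
proof
  show "\<forall>j\<in>{1..m}. 0 \<le> (beta j x)\<^sup>2 \<and> (beta j x)\<^sup>2 \<le> 1"
  proof
    fix j
    assume "j \<in> {1..m}"
    then have "(beta j x)\<^sup>2 + (beta' j x)\<^sup>2 = 1"
      using beta x by auto
    then have "(beta j x)\<^sup>2 \<le> 1"
      using zero_le_power2[of "beta' j x"] by linarith
    then show "0 \<le> (beta j x)\<^sup>2 \<and> (beta j x)\<^sup>2 \<le> 1"
      by simp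
  qed
  have "x \<in> {-1..1}"
    using x by simp
  then show "\<forall>k\<in>{1..m}. \<bar>poly (S k) x\<bar> \<le> 1"
    using S by blast
  show "\<forall>k\<in>{1..m}. phi k \<le> x \<longrightarrow>
      \<bar>poly (S k) x - sqrt (log 2 (2 / x)) / (2 * sqrt (real k + 1))\<bar> \<le> \<eta>"
    using S x by (auto simp: log_inverse_phi add.commute)
qed (use assms in auto)

lemma vest_entropy_error:
  fixes p :: "nat \<Rightarrow> real"
  assumes p: "\<forall>i\<in>{1..n}. 0 \<le> p i" and sum: "(\<Sum>i=1..n. p i) = 1"
    and m: "1 \<le> m" and \<eta>: "0 \<le> \<eta>"
    and beta: "\<forall>j\<in>{1..m}. \<forall>x\<in>{0..1}.
        (beta j x)\<^sup>2 + (beta' j x)\<^sup>2 = 1 \<and>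
        (x \<le> phi j \<longrightarrow> (beta j x)\<^sup>2 \<le> \<delta>\<^sup>2) \<and>
        (2 * phi j \<le> x \<longrightarrow> (beta j x)\<^sup>2 \<ge> 1 - \<delta>\<^sup>2)"
    and S: "\<forall>k\<in>{1..m}. (\<forall>x\<in>{-1..1}. \<bar>poly (S k) x\<bar> \<le> 1) \<and>
        (\<forall>x\<in>{phi k..1}. \<bar>poly (S k) x - sqrt (log 2 (2 / x)) / (2 * sqrt (log 2 (1 / phi (k+1))))\<bar> \<le> \<eta>)"
  shows "\<bar>vest n m p S beta beta' - entropy n p\<bar>
    \<le> 64 * ((\<Sum>i=1..n. p i * (log 2 (2 / sqrt (p i)))\<^sup>2) + 1) * (real m * \<delta>\<^sup>2 + \<eta> + real n / 2 ^ m)"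
proof -
  define E where "E i = point_estimate m (\<lambda>j. (beta j (sqrt (p i)))\<^sup>2) (\<lambda>k. poly (S k) (sqrt (p i)))" for i
  define L where "L i = log 2 (2 / sqrt (p i))" for i
  define F where "F = (\<Sum>i=1..n. p i * (L i)\<^sup>2)"
  have p01: "0 \<le> p i \<and> p i \<le> 1" if "i \<in> {1..n}" for i
    using p distribution_le_1[OF p sum that] that by auto
  have decomposition: "vest n m p S beta beta' - entropy n p = (\<Sum>i=1..n. p i * (E i - 2 * L i))"
    using vest_eq_sum_point_estimate[of m beta beta' n p S] entropy_eq_sum[OF p sum] beta p01
    by (simp add: E_def L_def sum_subtractf right_diff_distrib)
  have point: "p i * \<bar>E i - 2 * L i\<bar> \<le> 64 * (p i * ((L i)\<^sup>2 + 1)) * (real m * \<delta>\<^sup>2 + \<eta>) + 12 / 2 ^ m"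
    if i: "i \<in> {1..n}" for i
  proof (cases "p i = 0")
    case False
    then have "0 < sqrt (p i)" "sqrt (p i) \<le> 1"
      using p01[OF i] by auto
    then show ?thesis
      using estimator_point.pointwise_error[OF estimator_point_of_beta_S[OF m \<eta> _ _ beta S], where x = "sqrt (p i)"] p01[OF i]
      by (simp add: E_def L_def)
  qed (use \<eta> in simp)
  have "\<bar>\<Sum>i=1..n. p i * (E i - 2 * L i)\<bar> \<le> (\<Sum>i=1..n. p i * \<bar>E i - 2 * L i\<bar>)"
    using p01 by (auto intro: order.trans[OF sum_abs] sum_mono simp: abs_mult)
  also have "\<dots> \<le> (\<Sum>i=1..n. 64 * (p i * ((L i)\<^sup>2 + 1)) * (real m * \<delta>\<^sup>2 + \<eta>) + 12 / 2 ^ m)"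
    by (rule sum_mono) (rule point)
  also have "\<dots> = 64 * (F + 1) * (real m * \<delta>\<^sup>2 + \<eta>) + 12 * (real n / 2 ^ m)"
  proof -
    have "(\<Sum>i=1..n. p i * ((L i)\<^sup>2 + 1)) = F + 1"
      using sum by (simp add: F_def distrib_left sum.distrib)
    then show ?thesis
      by (simp add: sum.distrib flip: sum_distrib_left sum_distrib_right)
  qed
  also have "\<dots> \<le> 64 * (F + 1) * (real m * \<delta>\<^sup>2 + \<eta> + real n / 2 ^ m)"
  proof -
    have "0 \<le> F"
      unfolding F_def using p by (auto intro: sum_nonneg)
    then have "12 * (real n / 2 ^ m) \<le> 64 * (F + 1) * (real n / 2 ^ m)"
      by (intro mult_right_mono) auto
    then show ?thesis
      by (simp add: distrib_left)
  qed
  finally show ?thesis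
    unfolding decomposition by (simp add: F_def L_def)
qed

theorem theorem3:
  "\<exists>C::real. \<exists>c::nat. \<forall>(n::nat) (m::nat) (p::nat \<Rightarrow> real) (\<delta>::real) (\<eta>::real)
      (beta::nat \<Rightarrow> real \<Rightarrow> real) (beta'::nat \<Rightarrow> real \<Rightarrow> real) (S::nat \<Rightarrow> real poly).
    (\<forall>i\<in>{1..n}. p i \<ge> 0) \<and> (\<Sum>i=1..n. p i) = 1 \<and> m \<ge> 2 \<and> \<delta> > 0 \<and> \<eta> > 0 \<and>
    (\<forall>j\<in>{1..m}. \<forall>x\<in>{0..1}.
        (beta j x)\<^sup>2 + (beta' j x)\<^sup>2 = 1 \<and>
        (x \<le> phi j \<longrightarrow> (beta j x)\<^sup>2 \<le> \<delta>\<^sup>2) \<and>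
        (2 * phi j \<le> x \<longrightarrow> (beta j x)\<^sup>2 \<ge> 1 - \<delta>\<^sup>2)) \<and>
    (\<forall>k\<in>{1..m}. even_poly (S k) \<and>
        (\<forall>x\<in>{-1..1}. \<bar>poly (S k) x\<bar> \<le> 1) \<and>
        (\<forall>x\<in>{phi k..1}. \<bar>poly (S k) x - sqrt (log 2 (2 / x)) / (2 * sqrt (log 2 (1 / phi (k+1))))\<bar> \<le> \<eta>))
    \<longrightarrow> \<bar>vest n m p S beta beta' - entropy n p\<bar>
          \<le> C * (log 2 (2 + real n + real m + 1/\<delta> + 1/\<eta>)) ^ c
              * (real m * \<delta>\<^sup>2 + \<eta> + real n / 2 ^ m)"
proof (intro exI[of _ "64 * 108 :: real"] exI[of _ "2 :: nat"] allI impI, elim conjE, goal_cases)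
  case (1 n m p \<delta> \<eta> beta beta' S)
  define N where "N = 2 + real n + real m + 1/\<delta> + 1/\<eta>"
  have "0 < 1/\<delta>" "0 < 1/\<eta>"
    using 1 by simp_all
  then have N: "real n \<le> N" "2 \<le> N"
    unfolding N_def by linarith+
  have "\<bar>vest n m p S beta beta' - entropy n p\<bar>
      \<le> 64 * ((\<Sum>i=1..n. p i * (log 2 (2 / sqrt (p i)))\<^sup>2) + 1) * (real m * \<delta>\<^sup>2 + \<eta> + real n / 2 ^ m)"
    using 1 by (intro vest_entropy_error) auto
  also have "\<dots> \<le> 64 * (108 * (log 2 N)\<^sup>2) * (real m * \<delta>\<^sup>2 + \<eta> + real n / 2 ^ m)"
    using 1 sum_sq_log_le_log_sq[OF _ _ N, of p] by (intro mult_right_mono mult_left_mono) auto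
  finally show ?case
    by (simp add: N_def mult.assoc)
qed

end
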